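(* Let $G$ be an $H(4,3)$-free graph with $m$ edges, $\rho=\rho(G)$, and $u^*\in V(G)$. Put $N=N(u^* )$, $W=V(G)\setminus N[u^*]$, $A^{+}=\{v\in N: v\text{ has a neighbor in }N\}$. Assume: $G[A^{+}]\cong K_4$; $e(W)=2$; every vertex of $W$ has at most one neighbor in $A^{+}$ and at least one neighbor in $W$; and \[ \rho^2-\rho\Bigl(e(A^{+})-|A^{+}|+\tfrac32-e(W)\Bigr)<2e(A^{+})+|A^{+}|+e(A^{+},W). \] Then $\rho^2-\frac32\rho<18$. Consequently, if $m\ge 24$ is even, then $\rho(G)<\rho'(m)$.
   Context: $H(4,3)$ is the graph obtained from a $4$-cycle and a triangle by identifying one vertex of the $4$-cycle with one vertex of the triangle; $H(4,3)$-free means containing no subgraph isomorphic to $H(4,3)$. $N[u^*]=N(u^* )\cup\{u^*\}$. For a vertex set $X$, $e(X)$ is the number of edges of the induced subgraph $G[X]$; for disjoint $X,Y$, $e(X,Y)$ is the number of edges between $X$ and $Y$. $\rho(G)$ is the adjacency spectral radius. For even $m$, $\rho'(m)$ is the largest real root of $p_m(x)=x^4-mx^2-(m-2)x+\frac{m}{2}-1$; it is known that $\rho'(m)>L_m:=\frac{1+\sqrt{4m-5}}{2}$ for even $m\ge 6$. *)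

theory Defs
  imports Complex_Main "Jordan_Normal_Form.Spectral_Radius"
begin

definition simple_graph :: "nat \<Rightarrow> (nat \<Rightarrow> nat \<Rightarrow> bool) \<Rightarrow> bool" where
  "simple_graph n adj \<longleftrightarrow>
     (\<forall>u v. adj u v \<longrightarrow> u < n \<and> v < n) \<and>
     (\<forall>u v. adj u v \<longrightarrow> adj v u) \<and> (\<forall>u. \<not> adj u u)"

definition adj_matrix :: "nat \<Rightarrow> (nat \<Rightarrow> nat \<Rightarrow> bool) \<Rightarrow> complex mat" where
  "adj_matrix n adj = mat n n (\<lambda>(i, j). if adj i j then 1 else 0)"

definition rho :: "nat \<Rightarrow> (nat \<Rightarrow> nat \<Rightarrow> bool) \<Rightarrow> real" where
  "rho n adj = spectral_radius (adj_matrix n adj)"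

definition nbhd :: "nat \<Rightarrow> (nat \<Rightarrow> nat \<Rightarrow> bool) \<Rightarrow> nat \<Rightarrow> nat set" where
  "nbhd n adj u = {v. v < n \<and> adj u v}"

definition edges :: "nat \<Rightarrow> (nat \<Rightarrow> nat \<Rightarrow> bool) \<Rightarrow> nat set set" where
  "edges n adj = {{u, v} | u v. u < n \<and> v < n \<and> adj u v}"

definition num_edges :: "nat \<Rightarrow> (nat \<Rightarrow> nat \<Rightarrow> bool) \<Rightarrow> nat" where
  "num_edges n adj = card (edges n adj)"

definition e_in :: "(nat \<Rightarrow> nat \<Rightarrow> bool) \<Rightarrow> nat set \<Rightarrow> nat" where
  "e_in adj X = card {{u, v} | u v. u \<in> X \<and> v \<in> X \<and> adj u v}"

text \<open>e(X,Y): number of edges between (disjoint) X and Y.\<close>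
definition e_between :: "(nat \<Rightarrow> nat \<Rightarrow> bool) \<Rightarrow> nat set \<Rightarrow> nat set \<Rightarrow> nat" where
  "e_between adj X Y = card {(x, y). x \<in> X \<and> y \<in> Y \<and> adj x y}"

text \<open>G contains a subgraph isomorphic to H(4,3): a 4-cycle v a b c and a triangle v d e
  sharing exactly the vertex v (six distinct vertices).\<close>
definition contains_H43 :: "nat \<Rightarrow> (nat \<Rightarrow> nat \<Rightarrow> bool) \<Rightarrow> bool" where
  "contains_H43 n adj \<longleftrightarrow>
     (\<exists>v a b c d e. distinct [v, a, b, c, d, e] \<and> set [v, a, b, c, d, e] \<subseteq> {0..<n} \<and>
        adj v a \<and> adj a b \<and> adj b c \<and> adj c v \<and>
        adj v d \<and> adj d e \<and> adj e v)"

definition H43_free :: "nat \<Rightarrow> (nat \<Rightarrow> nat \<Rightarrow> bool) \<Rightarrow> bool" where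
  "H43_free n adj \<longleftrightarrow> \<not> contains_H43 n adj"

definition p_poly :: "nat \<Rightarrow> real \<Rightarrow> real" where
  "p_poly m x = x ^ 4 - real m * x ^ 2 - (real m - 2) * x + real m / 2 - 1"

definition rho' :: "nat \<Rightarrow> real" where
  "rho' m = Max {x. p_poly m x = 0}"

end

(* With e(A+) = 6, |A+| = 4 and e(W) = 2 the hypothesis reads rho^2 - 3/2 rho < 16 + e(A+,W),
   so it suffices to show e(A+,W) <= 2.  Together with u*, A+ spans a K5, and H(4,3)-freeness
   forbids a path x w w' y with x, y in that K5 and w, w' outside it.  Hence the vertices of W
   attached to A+ are pairwise nonadjacent; charging each of them to an edge of G[W] at it is
   injective, so there are at most e(W) = 2 of them, each attached by a single edge.
   Finally rho^2 - 3/2 rho < 18 forces rho < 5.1, whereas p_m(5.1) < 0 for m >= 23 and p_m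
   has positive leading coefficient, so p_m has a root above 5.1. *)
theory Submission
  imports Defs "HOL-Computational_Algebra.Polynomial"
begin

lemma p_poly_eq_poly: "p_poly m x = poly [:real m / 2 - 1, - (real m - 2), - real m, 0, 1:] x"
  unfolding p_poly_def by (simp add: algebra_simps power2_eq_square power3_eq_cube power4_eq_xxxx)

lemma finite_p_poly_roots: "finite {x. p_poly m x = 0}"
  unfolding p_poly_eq_poly by (rule poly_roots_finite) simp

lemma p_poly_nonneg:
  assumes "real m + 1 \<le> x"
  shows "0 \<le> p_poly m x"
proof -
  have x1: "1 \<le> x" using assms by simp
  have "2 * real m + 1 \<le> (real m + 1) ^ 2" by (simp add: power2_eq_square algebra_simps)
  also have "\<dots> \<le> x ^ 2" using assms by (intro power_mono) auto
  finally have "(2 * real m + 1) * x ^ 2 \<le> x ^ 2 * x ^ 2" by (rule mult_right_mono) simp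
  then have "2 * (real m * x ^ 2) + x ^ 2 \<le> x ^ 4"
    by (simp add: distrib_right flip: power_add)
  moreover have "real m * x \<le> real m * x ^ 2"
    using x1 by (auto simp: power2_eq_square intro: mult_left_mono)
  moreover have "(real m - 2) * x = real m * x - 2 * x" by (simp add: algebra_simps)
  ultimately show ?thesis
    unfolding p_poly_def using x1 zero_le_power2[of x] of_nat_0_le_iff[of m, where 'a = real]
    by linarith
qed

lemma less_rho'_if_p_poly_neg:
  assumes neg: "p_poly m a < 0"
  shows "a < rho' m"
proof -
  define b where "b = max a (real m + 1)"
  have "a \<le> b" "0 \<le> p_poly m b" unfolding b_def by (auto intro: p_poly_nonneg)
  moreover have "\<forall>x. a \<le> x \<and> x \<le> b \<longrightarrow> isCont (p_poly m) x"
    unfolding p_poly_def by (auto intro!: continuous_intros)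
  ultimately obtain x where x: "a \<le> x" "p_poly m x = 0"
    using IVT[of "p_poly m" a 0 b] neg by auto
  have "x \<le> rho' m"
    unfolding rho'_def using finite_p_poly_roots x(2) by (intro Max_ge) auto
  moreover have "x \<noteq> a" using x(2) neg by auto
  ultimately show ?thesis using x(1) by simp
qed

lemma p_poly_51_10_neg:
  assumes "23 \<le> m"
  shows "p_poly m (51 / 10) < 0"
  using assms unfolding p_poly_def by (simp add: power_def field_simps)

lemma e_in_clique:
  assumes "finite X" and irrefl: "\<forall>x. \<not> adj x x"
    and clique: "\<forall>x\<in>X. \<forall>y\<in>X. x \<noteq> y \<longrightarrow> adj x y"
  shows "e_in adj X = card X choose 2"
proof -
  have "{{u, v} | u v. u \<in> X \<and> v \<in> X \<and> adj u v} = {B. B \<subseteq> X \<and> card B = 2}"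
  proof (intro equalityI subsetI)
    fix B assume "B \<in> {{u, v} | u v. u \<in> X \<and> v \<in> X \<and> adj u v}"
    then obtain u v where "B = {u, v}" "u \<in> X" "v \<in> X" "adj u v" by blast
    moreover have "u \<noteq> v" using \<open>adj u v\<close> irrefl by auto
    ultimately show "B \<in> {B. B \<subseteq> X \<and> card B = 2}" by simp
  next
    fix B assume "B \<in> {B. B \<subseteq> X \<and> card B = 2}"
    then obtain u v where "B = {u, v}" "u \<noteq> v" "u \<in> X" "v \<in> X"
      by (auto simp: card_2_iff)
    then show "B \<in> {{u, v} | u v. u \<in> X \<and> v \<in> X \<and> adj u v}" using clique by blast
  qed
  then show ?thesis unfolding e_in_def using n_subsets[OF \<open>finite X\<close>] by simp
qed

lemma e_between_eq_card_attached:
  assumes "finite X" and sym: "\<forall>x y. adj x y \<longrightarrow> adj y x"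
    and unique: "\<forall>y\<in>Y. card {x \<in> X. adj y x} \<le> 1"
  shows "e_between adj X Y = card {y \<in> Y. \<exists>x\<in>X. adj x y}"
proof -
  let ?P = "{(x, y). x \<in> X \<and> y \<in> Y \<and> adj x y}"
  have "inj_on snd ?P"
  proof (rule inj_onI, clarsimp)
    fix x x' y assume "x \<in> X" "x' \<in> X" "y \<in> Y" "adj x y" "adj x' y"
    moreover have "card {x \<in> X. adj y x} \<le> Suc 0" using unique \<open>y \<in> Y\<close> by simp
    ultimately show "x = x'"
      using sym card_le_Suc0_iff_eq[of "{x \<in> X. adj y x}"] \<open>finite X\<close> by auto
  qed
  then have "card ?P = card (snd ` ?P)" by (simp add: card_image)
  moreover have "snd ` ?P = {y \<in> Y. \<exists>x\<in>X. adj x y}" by force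
  ultimately show ?thesis unfolding e_between_def by simp
qed

lemma card_independent_le_e_in:
  assumes "finite W" "S \<subseteq> W"
    and partner: "\<forall>w\<in>S. \<exists>w'\<in>W. adj w w'"
    and independent: "\<forall>w\<in>S. \<forall>w'\<in>S. \<not> adj w w'"
  shows "card S \<le> e_in adj W"
proof -
  define f where "f w = (SOME w'. w' \<in> W \<and> adj w w')" for w
  have f: "f w \<in> W \<and> adj w (f w)" if "w \<in> S" for w
  proof -
    have "\<exists>w'. w' \<in> W \<and> adj w w'" using partner that by blast
    then show ?thesis unfolding f_def by (rule someI_ex)
  qed
  let ?E = "{{u, v} | u v. u \<in> W \<and> v \<in> W \<and> adj u v}"
  have "inj_on (\<lambda>w. {w, f w}) S"
  proof (rule inj_onI)
    fix w1 w2 assume w: "w1 \<in> S" "w2 \<in> S" and eq: "{w1, f w1} = {w2, f w2}"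
    show "w1 = w2"
    proof (rule ccontr)
      assume "w1 \<noteq> w2"
      then have "w1 = f w2" using eq by (auto simp: doubleton_eq_iff)
      then show False using f[OF w(2)] independent w by auto
    qed
  qed
  moreover have "(\<lambda>w. {w, f w}) ` S \<subseteq> ?E" using f \<open>S \<subseteq> W\<close> by blast
  moreover have "finite ?E"
    by (rule finite_subset[of _ "Pow W"]) (use \<open>finite W\<close> in auto)
  ultimately show ?thesis unfolding e_in_def by (rule card_inj_on_le)
qed

text \<open>For x = y the triangle x w w' meets a 4-cycle through x inside C; otherwise the
  4-cycle x w w' y meets a triangle on x and two further vertices of C.\<close>
lemma H43_free_no_path3_outside_K5:
  assumes G: "simple_graph n adj" and free: "H43_free n adj"
    and C: "finite C" "5 \<le> card C" "\<forall>x\<in>C. \<forall>y\<in>C. x \<noteq> y \<longrightarrow> adj x y"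
    and xy: "x \<in> C" "y \<in> C" and ww': "w \<notin> C" "w' \<notin> C"
  shows "\<not> (adj x w \<and> adj w w' \<and> adj w' y)"
proof
  assume path: "adj x w \<and> adj w w' \<and> adj w' y"
  have irr: "\<And>a. \<not> adj a a"
    and bd: "\<And>a b. adj a b \<Longrightarrow> a < n \<and> b < n"
    using G unfolding simple_graph_def by blast+
  have "contains_H43 n adj"
  proof (cases "x = y")
    case True
    have "3 \<le> card (C - {x})" using C(1,2) xy by (simp add: card_Diff_singleton)
    then obtain T where "T \<subseteq> C - {x}" "card T = 3" by (metis obtain_subset_with_card_n)
    then obtain b z c where bzc: "{b, z, c} \<subseteq> C - {x}" "distinct [b, z, c]"
      by (auto simp: card_3_iff)
    then have H: "adj x b" "adj b z" "adj z c" "adj c x" "adj x w" "adj w w'" "adj w' x"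
      using True path xy C(3) by auto
    have D: "distinct [x, b, z, c, w, w']"
      using bzc ww' xy path irr by auto
    have R: "set [x, b, z, c, w, w'] \<subseteq> {0..<n}"
      using bd[OF H(1)] bd[OF H(3)] bd[OF H(6)] by simp
    show ?thesis unfolding contains_H43_def
      by (intro exI[of _ x] exI[of _ b] exI[of _ z] exI[of _ c] exI[of _ w] exI[of _ w']
          conjI D R H)
  next
    case False
    have "2 \<le> card (C - {x, y})" using C(1,2) xy False by (simp add: card_Diff_subset)
    then obtain T where "T \<subseteq> C - {x, y}" "card T = 2" by (metis obtain_subset_with_card_n)
    then obtain c d where cd: "{c, d} \<subseteq> C - {x, y}" "c \<noteq> d" by (auto simp: card_2_iff)
    then have H: "adj x w" "adj w w'" "adj w' y" "adj y x" "adj x c" "adj c d" "adj d x"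
      using False path xy C(3) by auto
    have D: "distinct [x, w, w', y, c, d]"
      using False cd ww' xy path irr by auto
    have R: "set [x, w, w', y, c, d] \<subseteq> {0..<n}"
      using bd[OF H(1)] bd[OF H(3)] bd[OF H(6)] by simp
    show ?thesis unfolding contains_H43_def
      by (intro exI[of _ x] exI[of _ w] exI[of _ w'] exI[of _ y] exI[of _ c] exI[of _ d]
          conjI D R H)
  qed
  then show False using free unfolding H43_free_def by blast
qed

lemma e_between_hub_K4_le_e_in:
  assumes G: "simple_graph n adj" and free: "H43_free n adj"
    and K: "finite K" "4 \<le> card K" "\<forall>x\<in>K. \<forall>y\<in>K. x \<noteq> y \<longrightarrow> adj x y"
    and hub: "u \<notin> K" "\<forall>x\<in>K. adj u x"
    and W: "finite W" "W \<inter> insert u K = {}"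
    and unique: "\<forall>w\<in>W. card {x \<in> K. adj w x} \<le> 1"
    and partner: "\<forall>w\<in>W. \<exists>w'\<in>W. adj w w'"
  shows "e_between adj K W \<le> e_in adj W"
proof -
  have sym: "\<forall>x y. adj x y \<longrightarrow> adj y x"
    using G unfolding simple_graph_def by blast
  define S where "S = {w \<in> W. \<exists>x\<in>K. adj x w}"
  have K5: "finite (insert u K)" "5 \<le> card (insert u K)"
    "\<forall>x\<in>insert u K. \<forall>y\<in>insert u K. x \<noteq> y \<longrightarrow> adj x y"
    using K hub sym by (auto simp: card_insert_disjoint)
  have "\<forall>w\<in>S. \<forall>w'\<in>S. \<not> adj w w'"
  proof (intro ballI)
    fix w w' assume "w \<in> S" "w' \<in> S"
    then obtain x y where "x \<in> K" "y \<in> K" "adj x w" "adj w' y" "w \<notin> insert u K"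
      "w' \<notin> insert u K"
      using sym W(2) unfolding S_def by blast
    then show "\<not> adj w w'"
      using H43_free_no_path3_outside_K5[OF G free K5] by blast
  qed
  moreover have "S \<subseteq> W" "\<forall>w\<in>S. \<exists>w'\<in>W. adj w w'"
    using partner unfolding S_def by auto
  ultimately have "card S \<le> e_in adj W"
    using card_independent_le_e_in W(1) by blast
  moreover have "e_between adj K W = card S"
    unfolding S_def using e_between_eq_card_attached[OF K(1) sym] unique by blast
  ultimately show ?thesis by simp
qed

theorem proposition7p1:
  fixes n :: nat and adj :: "nat \<Rightarrow> nat \<Rightarrow> bool" and u :: nat
  defines "N \<equiv> nbhd n adj u"
  defines "W \<equiv> {0..<n} - (N \<union> {u})"
  defines "Ap \<equiv> {v \<in> N. \<exists>w \<in> N. adj v w}"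
  defines "r \<equiv> rho n adj"
  assumes G: "simple_graph n adj"
    and free: "H43_free n adj"
    and u: "u < n"
    and K4: "card Ap = 4" "\<forall>x\<in>Ap. \<forall>y\<in>Ap. x \<noteq> y \<longrightarrow> adj x y"
    and eW: "e_in adj W = 2"
    and W1: "\<forall>w\<in>W. card {a \<in> Ap. adj w a} \<le> 1"
    and W2: "\<forall>w\<in>W. \<exists>w'\<in>W. adj w w'"
    and ineq: "r ^ 2 - r * (real (e_in adj Ap) - real (card Ap) + 3 / 2 - real (e_in adj W))
               < 2 * real (e_in adj Ap) + real (card Ap) + real (e_between adj Ap W)"
  shows "r ^ 2 - 3 / 2 * r < 18 \<and>
         (\<forall>m. m = num_edges n adj \<longrightarrow> m \<ge> 24 \<longrightarrow> even m \<longrightarrow> r < rho' m)"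
proof -
  have irr: "\<forall>x. \<not> adj x x"
    using G unfolding simple_graph_def by blast
  have hub: "u \<notin> Ap" "\<forall>x\<in>Ap. adj u x" and finAp: "finite Ap"
    using K4(1) irr unfolding Ap_def N_def nbhd_def by (auto intro: card_ge_0_finite)
  have "e_in adj Ap = 6"
    using e_in_clique[OF finAp] irr K4 by (simp add: choose_two)
  moreover have "e_between adj Ap W \<le> 2"
  proof -
    have W: "finite W" "W \<inter> insert u Ap = {}"
      unfolding W_def Ap_def by auto
    show ?thesis
      using e_between_hub_K4_le_e_in[OF G free finAp _ K4(2) hub W] K4(1) W1 W2 eW by simp
  qed
  ultimately have part1: "r ^ 2 - 3 / 2 * r < 18"
    using ineq K4(1) eW by simp
  have "r < 51 / 10"
  proof (rule ccontr)
    assume "\<not> r < 51 / 10"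
    then have "51 / 10 * (51 / 10 - 3 / 2) \<le> r * (r - 3 / 2)" by (intro mult_mono) auto
    then show False using part1 by (simp add: power2_eq_square algebra_simps)
  qed
  moreover have "51 / 10 < rho' m" if "24 \<le> m" for m
    using that by (intro less_rho'_if_p_poly_neg p_poly_51_10_neg) simp
  ultimately show ?thesis
    using part1 by (meson less_trans)
qed

end
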